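(* Let $R$ be a ring. Then $R$ is a CSNC ring if and only if for every clean element $a\in R$ one has $a-a^2\in \mathrm{Nil}(R)$.
   Context: All rings are associative with identity $1$. For a ring $R$, $\mathrm{Id}(R)$, $U(R)$, $\mathrm{Nil}(R)$ denote the sets of idempotents, units and nilpotent elements. An element $a\in R$ is clean if $a=e+u$ for some $e\in\mathrm{Id}(R)$, $u\in U(R)$. An element $a$ is nil-clean if $a=e+q$ with $e\in \mathrm{Id}(R)$, $q\in\mathrm{Nil}(R)$, and strongly nil-clean if moreover $eq=qe$. A ring $R$ is called CSNC if every clean element of $R$ is strongly nil-clean. *)

theory Defs
  imports Main
begin

definition idem :: "'a::ring_1 \<Rightarrow> bool" where
  "idem e \<longleftrightarrow> e * e = e"

definition unit_elem :: "'a::ring_1 \<Rightarrow> bool" where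
  "unit_elem u \<longleftrightarrow> (\<exists>v. u * v = 1 \<and> v * u = 1)"

definition nilpotent :: "'a::ring_1 \<Rightarrow> bool" where
  "nilpotent q \<longleftrightarrow> (\<exists>n::nat. q ^ n = 0)"

definition clean :: "'a::ring_1 \<Rightarrow> bool" where
  "clean a \<longleftrightarrow> (\<exists>e u. idem e \<and> unit_elem u \<and> a = e + u)"

definition strongly_nil_clean :: "'a::ring_1 \<Rightarrow> bool" where
  "strongly_nil_clean a \<longleftrightarrow> (\<exists>e q. idem e \<and> nilpotent q \<and> e * q = q * e \<and> a = e + q)"

definition CSNC :: "'a::ring_1 itself \<Rightarrow> bool" where
  "CSNC _ \<longleftrightarrow> (\<forall>a::'a. clean a \<longrightarrow> strongly_nil_clean a)"

end

theory Submission
  imports Defs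
begin

text \<open>An element is strongly nil-clean iff \<open>a - a\<^sup>2\<close> is nilpotent, so both sides of the
theorem restrict the same property to the clean elements. If \<open>a = e + q\<close> with \<open>e\<close> idempotent
and \<open>q\<close> nilpotent commuting with \<open>e\<close>, then \<open>a - a\<^sup>2 = q (1 - 2e - q)\<close> is nilpotent.
Conversely, if \<open>b = a - a\<^sup>2\<close> is nilpotent, Newton's iteration \<open>x \<mapsto> 3x\<^sup>2 - 2x\<^sup>3\<close> started at
\<open>a\<close> squares the defect \<open>x - x\<^sup>2\<close> up to a factor in each step, so after \<open>k\<close> steps the defect is
a multiple of \<open>b\<^bsup>2^k\<^esup>\<close> and eventually vanishes, while every iterate differs from \<open>a\<close> by a
multiple of \<open>b\<close>. All elements involved are polynomials in \<open>a\<close>; they commute with each other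
because they lie in the bicommutant of \<open>a\<close>.\<close>

lemma power_mult_commuting:
  fixes x y :: "'a::ring_1"
  assumes "x * y = y * x"
  shows "(x * y) ^ n = x ^ n * y ^ n"
proof (induction n)
  case 0
  then show ?case by simp
next
  case (Suc n)
  have "y * x ^ n = x ^ n * y"
    using power_commuting_commutes[OF assms] by simp
  moreover have "(x * y) ^ Suc n = x * (y * x ^ n) * y ^ n"
    using Suc by (simp add: mult.assoc)
  ultimately show ?case
    by (simp add: mult.assoc)
qed

lemma nilpotent_mult_commuting:
  fixes x y :: "'a::ring_1"
  assumes "x * y = y * x" and "nilpotent x"
  shows "nilpotent (x * y)"
proof -
  obtain n where "x ^ n = 0"
    using assms(2) unfolding nilpotent_def by blast
  then have "(x * y) ^ n = 0"
    by (simp add: power_mult_commuting[OF assms(1)])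
  then show ?thesis
    unfolding nilpotent_def by blast
qed

lemma power_eq_0_if_exponent_ge:
  fixes x :: "'a::ring_1"
  assumes "x ^ n = 0" and "n \<le> m"
  shows "x ^ m = 0"
proof -
  have "x ^ m = x ^ n * x ^ (m - n)"
    using assms(2) by (simp flip: power_add)
  with assms(1) show ?thesis by simp
qed

definition bicommutant :: "'a::ring_1 \<Rightarrow> 'a set" where
  "bicommutant a = {x. \<forall>y. y * a = a * y \<longrightarrow> x * y = y * x}"

lemma bicommutantI: "(\<And>y. y * a = a * y \<Longrightarrow> x * y = y * x) \<Longrightarrow> x \<in> bicommutant a"
  unfolding bicommutant_def by blast

lemma bicommutantD: "x \<in> bicommutant a \<Longrightarrow> y * a = a * y \<Longrightarrow> x * y = y * x"
  unfolding bicommutant_def by blast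

lemma bicommutant_commute:
  assumes "x \<in> bicommutant a" and "z \<in> bicommutant a"
  shows "x * z = z * x"
  using assms by (metis bicommutantD)

lemma bicommutant_self: "a \<in> bicommutant a"
  by (rule bicommutantI) (erule sym)

lemma bicommutant_zero: "0 \<in> bicommutant a"
  by (rule bicommutantI) simp

lemma bicommutant_one: "1 \<in> bicommutant a"
  by (rule bicommutantI) simp

lemma bicommutant_numeral: "numeral n \<in> bicommutant a"
  by (rule bicommutantI) (metis mult_of_nat_commute of_nat_numeral)

lemma bicommutant_add:
  "x \<in> bicommutant a \<Longrightarrow> z \<in> bicommutant a \<Longrightarrow> x + z \<in> bicommutant a"
  by (rule bicommutantI) (simp add: distrib_left distrib_right bicommutantD)

lemma bicommutant_diff:
  "x \<in> bicommutant a \<Longrightarrow> z \<in> bicommutant a \<Longrightarrow> x - z \<in> bicommutant a"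
  by (rule bicommutantI) (simp add: left_diff_distrib right_diff_distrib bicommutantD)

lemma bicommutant_mult:
  "x \<in> bicommutant a \<Longrightarrow> z \<in> bicommutant a \<Longrightarrow> x * z \<in> bicommutant a"
  by (rule bicommutantI) (metis bicommutantD mult.assoc)

lemma bicommutant_power: "x \<in> bicommutant a \<Longrightarrow> x ^ n \<in> bicommutant a"
  by (induction n) (simp_all add: bicommutant_one bicommutant_mult)

lemmas bicommutant_closed =
  bicommutant_self bicommutant_zero bicommutant_one bicommutant_numeral
  bicommutant_add bicommutant_diff bicommutant_mult bicommutant_power

definition idem_step :: "'a::ring_1 \<Rightarrow> 'a" where
  "idem_step x = 3 * x ^ 2 - 2 * x ^ 3"

text \<open>Numerals do not commute with variables under the simplifier in a noncommutative ring,
so they are first expanded into sums of \<open>1\<close>.\<close>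

lemma idem_step_defect:
  fixes x :: "'a::ring_1"
  shows "idem_step x - idem_step x * idem_step x = (x - x * x) * (x - x * x) * (3 + 4 * (x - x * x))"
  unfolding idem_step_def power2_eq_square power3_eq_cube
  unfolding numeral_Bit0 numeral_Bit1 numeral_One
  by (simp only: algebra_simps mult_1_left mult_1_right)

lemma idem_step_shift:
  fixes x :: "'a::ring_1"
  shows "x - idem_step x = (x - x * x) * (1 - 2 * x)"
  unfolding idem_step_def power2_eq_square power3_eq_cube
  unfolding numeral_Bit0 numeral_Bit1 numeral_One
  by (simp only: algebra_simps mult_1_left mult_1_right)

lemma idem_step_iterate_bicommutant: "(idem_step ^^ k) a \<in> bicommutant a"
  by (induction k) (simp_all add: idem_step_def bicommutant_closed)

lemma idem_step_iterate_defect: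
  fixes a :: "'a::ring_1" and k :: nat
  shows "\<exists>z\<in>bicommutant a.
    (idem_step ^^ k) a - (idem_step ^^ k) a * (idem_step ^^ k) a = (a - a * a) ^ (2 ^ k) * z"
proof (induction k)
  case 0
  show ?case
    by (rule bexI[of _ 1]) (simp_all add: bicommutant_one)
next
  case (Suc k)
  define x where "x = (idem_step ^^ k) a"
  define P where "P = (a - a * a) ^ (2 ^ k)"
  obtain z where z: "z \<in> bicommutant a" and defect: "x - x * x = P * z"
    using Suc unfolding x_def P_def by blast
  have "P \<in> bicommutant a"
    unfolding P_def by (intro bicommutant_closed)
  then have "z * P = P * z"
    using z by (metis bicommutant_commute)
  then have "P * z * (P * z) = P * P * (z * z)"
    by (metis mult.assoc)
  moreover have "(a - a * a) ^ (2 ^ Suc k) = P * P"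
    unfolding P_def by (simp add: mult_2 power_add)
  ultimately have "idem_step x - idem_step x * idem_step x
      = (a - a * a) ^ (2 ^ Suc k) * (z * z * (3 + 4 * (P * z)))"
    unfolding idem_step_defect defect by (simp add: mult.assoc)
  moreover have "z * z * (3 + 4 * (P * z)) \<in> bicommutant a"
    using z \<open>P \<in> bicommutant a\<close> by (intro bicommutant_closed)
  ultimately show ?case
    unfolding x_def by auto
qed

lemma idem_step_iterate_shift:
  fixes a :: "'a::ring_1" and k :: nat
  shows "\<exists>w\<in>bicommutant a. a - (idem_step ^^ k) a = (a - a * a) * w"
proof (induction k)
  case 0
  show ?case
    by (rule bexI[of _ 0]) (simp_all add: bicommutant_zero)
next
  case (Suc k)
  define b where "b = a - a * a"
  define x where "x = (idem_step ^^ k) a"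
  obtain w where w: "w \<in> bicommutant a" and shift: "a - x = b * w"
    using Suc unfolding x_def b_def by blast
  obtain z where z: "z \<in> bicommutant a" and defect: "x - x * x = b ^ (2 ^ k) * z"
    using idem_step_iterate_defect[of a k] unfolding x_def b_def by blast
  have "b ^ (2 ^ k) = b * b ^ (2 ^ k - 1)"
    by (simp flip: power_Suc)
  then have "x - idem_step x = b * (b ^ (2 ^ k - 1) * z * (1 - 2 * x))"
    using defect idem_step_shift[of x] by (simp add: mult.assoc)
  moreover have "a - idem_step x = (a - x) + (x - idem_step x)"
    by simp
  ultimately have "a - idem_step x = b * (w + b ^ (2 ^ k - 1) * z * (1 - 2 * x))"
    using shift by (simp add: distrib_left)
  moreover have "w + b ^ (2 ^ k - 1) * z * (1 - 2 * x) \<in> bicommutant a"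
    using w z idem_step_iterate_bicommutant[of k a]
    unfolding b_def x_def by (intro bicommutant_closed)
  ultimately show ?case
    unfolding b_def x_def by auto
qed

lemma strongly_nil_clean_if_nilpotent:
  fixes a :: "'a::ring_1"
  assumes "nilpotent (a - a ^ 2)"
  shows "strongly_nil_clean a"
proof -
  define b where "b = a - a * a"
  obtain n where b_nil: "b ^ n = 0"
    using assms unfolding nilpotent_def b_def power2_eq_square by blast
  define e where "e = (idem_step ^^ n) a"
  define q where "q = a - e"
  obtain z where "e - e * e = b ^ (2 ^ n) * z"
    using idem_step_iterate_defect[of a n] unfolding e_def b_def by blast
  moreover have "b ^ (2 ^ n) = 0"
    using b_nil less_exp[of n] by (simp add: power_eq_0_if_exponent_ge)
  ultimately have "idem e"
    unfolding idem_def by simp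
  obtain w where w: "w \<in> bicommutant a" and "q = b * w"
    using idem_step_iterate_shift[of a n] unfolding q_def e_def b_def by blast
  moreover have "b * w = w * b"
    using w unfolding b_def by (intro bicommutant_commute[of _ a] bicommutant_closed)
  moreover have "nilpotent b"
    using b_nil unfolding nilpotent_def by blast
  ultimately have "nilpotent q"
    using nilpotent_mult_commuting by metis
  have "e \<in> bicommutant a"
    unfolding e_def by (rule idem_step_iterate_bicommutant)
  then have "e * q = q * e"
    unfolding q_def by (intro bicommutant_commute[of _ a] bicommutant_closed)
  moreover have "a = e + q"
    unfolding q_def by simp
  ultimately show ?thesis
    using \<open>idem e\<close> \<open>nilpotent q\<close> unfolding strongly_nil_clean_def by blast
qed

lemma nilpotent_if_strongly_nil_clean:
  fixes a :: "'a::ring_1"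
  assumes "strongly_nil_clean a"
  shows "nilpotent (a - a ^ 2)"
proof -
  obtain e q where e: "e * e = e" and q: "nilpotent q" and eq: "e * q = q * e" and a: "a = e + q"
    using assms unfolding strongly_nil_clean_def idem_def by blast
  have "a - a ^ 2 = q * (1 - e - e - q)"
    unfolding a power2_eq_square by (simp add: algebra_simps e eq)
  moreover have "q * (1 - e - e - q) = (1 - e - e - q) * q"
    by (simp add: algebra_simps eq)
  ultimately show ?thesis
    using nilpotent_mult_commuting[OF _ q] by simp
qed

lemma strongly_nil_clean_iff_nilpotent:
  fixes a :: "'a::ring_1"
  shows "strongly_nil_clean a \<longleftrightarrow> nilpotent (a - a ^ 2)"
  using strongly_nil_clean_if_nilpotent nilpotent_if_strongly_nil_clean by blast

theorem theorem2p1: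
  shows "CSNC TYPE('a::ring_1) \<longleftrightarrow> (\<forall>a::'a. clean a \<longrightarrow> nilpotent (a - a ^ 2))"
  unfolding CSNC_def strongly_nil_clean_iff_nilpotent ..

end
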